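(* Fix an integer $k\geq1$ and $V=\{0,\ldots,k\}$. If a Boolean function $\varphi$ on $V$ satisfies $\mathrm{eul}(\varphi)=0$, then $\varphi$ is fragmentable.
   Context: A valuation is a subset $\nu\subseteq V$; $\nu^{(l)}$ is $\nu$ with membership of $l$ flipped. A Boolean function on $V$ is a map $\varphi:2^V\to\{\text{false},\text{true}\}$; $\mathrm{eul}(\varphi)=\sum_{\nu:\varphi(\nu)=\text{true}}(-1)^{|\nu|}$. $\varphi$ is degenerate if there is $l\in V$ with $\varphi(\nu)=\varphi(\nu^{(l)})$ for all $\nu$. Two functions are disjoint if no valuation satisfies both. A $\neg$-$\vee$-template is a Boolean circuit all of whose internal gates are $\neg$- or $\vee$-gates (a single leaf is allowed); its leaves $l_0,\ldots,l_n$ are holes. $T[\varphi_0,\ldots,\varphi_n]$ is the function obtained by substituting $\varphi_i$ for $l_i$; it is deterministic if, for every $\vee$-gate of the template, any two distinct inputs compute disjoint functions. $\varphi$ is fragmentable if there exist a $\neg$-$\vee$-template $T$ and degenerate functions $\varphi_0,\ldots,\varphi_n$ (one per hole) such that $T[\varphi_0,\ldots,\varphi_n]$ is deterministic and equivalent to $\varphi$. *)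

theory Defs
  imports Main
begin

text \<open>Valuations are subsets of V (here represented as sets of naturals);
a Boolean function on V is a map from valuations to bool, of which only the
values on subsets of V are relevant.\<close>

definition flip :: "nat set \<Rightarrow> nat \<Rightarrow> nat set" where
  "flip \<nu> l = (if l \<in> \<nu> then \<nu> - {l} else insert l \<nu>)"

definition eul :: "nat set \<Rightarrow> (nat set \<Rightarrow> bool) \<Rightarrow> int" where
  "eul V \<phi> = (\<Sum>\<nu> \<in> {\<nu>. \<nu> \<subseteq> V \<and> \<phi> \<nu>}. (-1) ^ card \<nu>)"

definition degenerate :: "nat set \<Rightarrow> (nat set \<Rightarrow> bool) \<Rightarrow> bool" where
  "degenerate V \<phi> = (\<exists>l \<in> V. \<forall>\<nu>. \<nu> \<subseteq> V \<longrightarrow> \<phi> \<nu> = \<phi> (flip \<nu> l))"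

definition disjoint_fun :: "nat set \<Rightarrow> (nat set \<Rightarrow> bool) \<Rightarrow> (nat set \<Rightarrow> bool) \<Rightarrow> bool" where
  "disjoint_fun V f g = (\<forall>\<nu>. \<nu> \<subseteq> V \<longrightarrow> \<not> (f \<nu> \<and> g \<nu>))"

definition equiv_fun :: "nat set \<Rightarrow> (nat set \<Rightarrow> bool) \<Rightarrow> (nat set \<Rightarrow> bool) \<Rightarrow> bool" where
  "equiv_fun V f g = (\<forall>\<nu>. \<nu> \<subseteq> V \<longrightarrow> f \<nu> = g \<nu>)"

text \<open>Negation-disjunction templates (unfolded into trees; shared gates of a
circuit are duplicated, which does not change the class of fragmentable
functions).\<close>

datatype tmpl = Hole nat | NegT tmpl | OrT "tmpl list"

fun holes :: "tmpl \<Rightarrow> nat set" where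
  "holes (Hole i) = {i}"
| "holes (NegT t) = holes t"
| "holes (OrT ts) = (\<Union>t \<in> set ts. holes t)"

fun eval_t :: "(nat \<Rightarrow> nat set \<Rightarrow> bool) \<Rightarrow> tmpl \<Rightarrow> nat set \<Rightarrow> bool" where
  "eval_t \<psi> (Hole i) \<nu> = \<psi> i \<nu>"
| "eval_t \<psi> (NegT t) \<nu> = (\<not> eval_t \<psi> t \<nu>)"
| "eval_t \<psi> (OrT ts) \<nu> = (\<exists>t \<in> set ts. eval_t \<psi> t \<nu>)"

fun deterministic :: "nat set \<Rightarrow> (nat \<Rightarrow> nat set \<Rightarrow> bool) \<Rightarrow> tmpl \<Rightarrow> bool" where
  "deterministic V \<psi> (Hole i) = True"
| "deterministic V \<psi> (NegT t) = deterministic V \<psi> t"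
| "deterministic V \<psi> (OrT ts) =
     ((\<forall>t \<in> set ts. deterministic V \<psi> t) \<and>
      (\<forall>i < length ts. \<forall>j < length ts. i \<noteq> j \<longrightarrow>
          disjoint_fun V (eval_t \<psi> (ts ! i)) (eval_t \<psi> (ts ! j))))"

definition fragmentable :: "nat set \<Rightarrow> (nat set \<Rightarrow> bool) \<Rightarrow> bool" where
  "fragmentable V \<phi> = (\<exists>T \<psi>. (\<forall>i \<in> holes T. degenerate V (\<psi> i))
      \<and> deterministic V \<psi> T \<and> equiv_fun V (eval_t \<psi> T) \<phi>)"

end

theory Submission
  imports Defs
begin

text \<open>Fragmentable functions contain the degenerate ones and are closed under negation and
disjoint disjunction, hence under removing a fragmentable subfunction. Two valuations at odd
Hamming distance form a fragmentable function: adjacent valuations form a degenerate one, and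
flipping two coordinates of \<nu> towards \<mu> gives \<nu>', \<nu>'' with
{\<nu>, \<mu>} = ({\<nu>, \<nu>'} \<union> {\<nu>'', \<mu>}) - {\<nu>', \<nu>''},
where \<nu>'' is closer to \<mu>. If eul \<phi> = 0 and \<phi> has a model, it has a model of even and one
of odd cardinality; these are at odd distance, and removing both keeps eul \<phi> = 0. Induction on
the number of models ends at the degenerate function false.\<close>

fun map_holes :: "(nat \<Rightarrow> nat) \<Rightarrow> tmpl \<Rightarrow> tmpl" where
  "map_holes f (Hole i) = Hole (f i)"
| "map_holes f (NegT t) = NegT (map_holes f t)"
| "map_holes f (OrT ts) = OrT (map (map_holes f) ts)"

lemma eval_t_map_holes: "eval_t \<psi> (map_holes f t) = eval_t (\<psi> \<circ> f) t"
  by (induction t) auto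

lemma holes_map_holes: "holes (map_holes f t) = f ` holes t"
  by (induction t) auto

lemma deterministic_map_holes:
  "deterministic V \<psi> (map_holes f t) = deterministic V (\<psi> \<circ> f) t"
  by (induction t) (auto simp: eval_t_map_holes comp_def)

lemma fragmentable_cong:
  assumes "fragmentable V \<phi>" "equiv_fun V \<phi> \<chi>"
  shows "fragmentable V \<chi>"
  using assms unfolding fragmentable_def equiv_fun_def by metis

lemma fragmentable_degenerate:
  assumes "degenerate V \<phi>"
  shows "fragmentable V \<phi>"
  unfolding fragmentable_def
  by (intro exI[of _ "Hole 0"] exI[of _ "\<lambda>_. \<phi>"]) (use assms in \<open>simp add: equiv_fun_def\<close>)

lemma fragmentable_False:
  assumes "V \<noteq> {}"
  shows "fragmentable V (\<lambda>_. False)"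
  using assms by (intro fragmentable_degenerate) (auto simp: degenerate_def)

lemma fragmentable_Not:
  assumes "fragmentable V \<phi>"
  shows "fragmentable V (\<lambda>\<nu>. \<not> \<phi> \<nu>)"
proof -
  obtain T \<psi> where "\<forall>i \<in> holes T. degenerate V (\<psi> i)" "deterministic V \<psi> T"
    "equiv_fun V (eval_t \<psi> T) \<phi>"
    using assms unfolding fragmentable_def by blast
  then have "(\<forall>i \<in> holes (NegT T). degenerate V (\<psi> i)) \<and> deterministic V \<psi> (NegT T)
      \<and> equiv_fun V (eval_t \<psi> (NegT T)) (\<lambda>\<nu>. \<not> \<phi> \<nu>)"
    by (simp add: equiv_fun_def)
  then show ?thesis
    unfolding fragmentable_def by blast
qed

lemma fragmentable_disj:
  assumes "fragmentable V \<phi>" "fragmentable V \<chi>" "disjoint_fun V \<phi> \<chi>"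
  shows "fragmentable V (\<lambda>\<nu>. \<phi> \<nu> \<or> \<chi> \<nu>)"
proof -
  obtain T\<^sub>1 \<psi>\<^sub>1 where T\<^sub>1: "\<forall>i \<in> holes T\<^sub>1. degenerate V (\<psi>\<^sub>1 i)" "deterministic V \<psi>\<^sub>1 T\<^sub>1"
    "equiv_fun V (eval_t \<psi>\<^sub>1 T\<^sub>1) \<phi>"
    using assms(1) unfolding fragmentable_def by blast
  obtain T\<^sub>2 \<psi>\<^sub>2 where T\<^sub>2: "\<forall>i \<in> holes T\<^sub>2. degenerate V (\<psi>\<^sub>2 i)" "deterministic V \<psi>\<^sub>2 T\<^sub>2"
    "equiv_fun V (eval_t \<psi>\<^sub>2 T\<^sub>2) \<chi>"
    using assms(2) unfolding fragmentable_def by blast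
  define \<psi> where "\<psi> j = (if even j then \<psi>\<^sub>1 (j div 2) else \<psi>\<^sub>2 (j div 2))" for j
  define L where "L = map_holes (\<lambda>i. 2 * i) T\<^sub>1"
  define R where "R = map_holes (\<lambda>i. 2 * i + 1) T\<^sub>2"
  have "\<psi> \<circ> (\<lambda>i. 2 * i) = \<psi>\<^sub>1" "\<psi> \<circ> (\<lambda>i. 2 * i + 1) = \<psi>\<^sub>2"
    by (auto simp: \<psi>_def)
  then have evals: "eval_t \<psi> L = eval_t \<psi>\<^sub>1 T\<^sub>1" "eval_t \<psi> R = eval_t \<psi>\<^sub>2 T\<^sub>2"
    and dets: "deterministic V \<psi> L" "deterministic V \<psi> R"
    using T\<^sub>1(2) T\<^sub>2(2)
    by (simp_all add: L_def R_def eval_t_map_holes deterministic_map_holes)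
  have "\<forall>i \<in> holes (OrT [L, R]). degenerate V (\<psi> i)"
    using T\<^sub>1(1) T\<^sub>2(1) by (auto simp: L_def R_def holes_map_holes \<psi>_def)
  moreover have "deterministic V \<psi> (OrT [L, R])"
    using dets evals T\<^sub>1(3) T\<^sub>2(3) assms(3)
    by (auto simp: less_Suc_eq disjoint_fun_def equiv_fun_def)
  moreover have "equiv_fun V (eval_t \<psi> (OrT [L, R])) (\<lambda>\<nu>. \<phi> \<nu> \<or> \<chi> \<nu>)"
    using evals T\<^sub>1(3) T\<^sub>2(3) by (auto simp: equiv_fun_def)
  ultimately show ?thesis
    unfolding fragmentable_def by blast
qed

lemma fragmentable_diff:
  assumes "fragmentable V \<phi>" "fragmentable V \<chi>" "\<And>\<nu>. \<nu> \<subseteq> V \<Longrightarrow> \<chi> \<nu> \<Longrightarrow> \<phi> \<nu>"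
  shows "fragmentable V (\<lambda>\<nu>. \<phi> \<nu> \<and> \<not> \<chi> \<nu>)"
proof -
  have "fragmentable V (\<lambda>\<nu>. \<not> \<phi> \<nu> \<or> \<chi> \<nu>)"
    using assms by (intro fragmentable_disj fragmentable_Not) (auto simp: disjoint_fun_def)
  from fragmentable_Not[OF this] show ?thesis
    by simp
qed

lemma fragmentable_of_diff:
  assumes "fragmentable V (\<lambda>\<nu>. \<phi> \<nu> \<and> \<not> \<chi> \<nu>)" "fragmentable V \<chi>"
    and "\<And>\<nu>. \<nu> \<subseteq> V \<Longrightarrow> \<chi> \<nu> \<Longrightarrow> \<phi> \<nu>"
  shows "fragmentable V \<phi>"
proof -
  have "fragmentable V (\<lambda>\<nu>. (\<phi> \<nu> \<and> \<not> \<chi> \<nu>) \<or> \<chi> \<nu>)"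
    using assms(1,2) by (rule fragmentable_disj) (auto simp: disjoint_fun_def)
  then show ?thesis
    by (rule fragmentable_cong) (use assms(3) in \<open>auto simp: equiv_fun_def\<close>)
qed

lemma flip_flip [simp]: "flip (flip \<nu> l) l = \<nu>"
  by (auto simp: flip_def)

lemma flip_subset: "\<nu> \<subseteq> V \<Longrightarrow> l \<in> V \<Longrightarrow> flip \<nu> l \<subseteq> V"
  by (auto simp: flip_def)

lemma flip_neq [simp]: "flip \<nu> l \<noteq> \<nu>"
  by (auto simp: flip_def)

lemma sym_diff_flip: "l \<in> sym_diff \<nu> \<mu> \<Longrightarrow> sym_diff (flip \<nu> l) \<mu> = sym_diff \<nu> \<mu> - {l}"
  by (auto simp: flip_def)

lemma even_card_sym_diff_iff:
  assumes "finite A" "finite B"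
  shows "even (card (sym_diff A B)) \<longleftrightarrow> even (card A + card B)"
proof -
  have "card A = card (A \<inter> B) + card (A - B)" "card B = card (A \<inter> B) + card (B - A)"
    using assms card_Int_Diff[of A B] card_Int_Diff[of B A] by (simp_all add: Int_commute)
  moreover have "card (sym_diff A B) = card (A - B) + card (B - A)"
    using assms by (intro card_Un_disjoint) auto
  ultimately show ?thesis
    by auto
qed

lemma fragmentable_flip_pair:
  assumes "l \<in> V"
  shows "fragmentable V (\<lambda>x. x = \<nu> \<or> x = flip \<nu> l)"
proof (rule fragmentable_degenerate)
  show "degenerate V (\<lambda>x. x = \<nu> \<or> x = flip \<nu> l)"
    unfolding degenerate_def using assms by (metis flip_flip)
qed

lemma fragmentable_pair_chain:
  assumes "fragmentable V (\<lambda>x. x = \<nu>\<^sub>0 \<or> x = \<nu>\<^sub>1)" "fragmentable V (\<lambda>x. x = \<nu>\<^sub>1 \<or> x = \<nu>\<^sub>2)"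
    and "fragmentable V (\<lambda>x. x = \<nu>\<^sub>2 \<or> x = \<nu>\<^sub>3)" "distinct [\<nu>\<^sub>0, \<nu>\<^sub>1, \<nu>\<^sub>2, \<nu>\<^sub>3]"
  shows "fragmentable V (\<lambda>x. x = \<nu>\<^sub>0 \<or> x = \<nu>\<^sub>3)"
proof -
  have neq: "\<nu>\<^sub>0 \<noteq> \<nu>\<^sub>1" "\<nu>\<^sub>0 \<noteq> \<nu>\<^sub>2" "\<nu>\<^sub>0 \<noteq> \<nu>\<^sub>3" "\<nu>\<^sub>1 \<noteq> \<nu>\<^sub>2" "\<nu>\<^sub>1 \<noteq> \<nu>\<^sub>3" "\<nu>\<^sub>2 \<noteq> \<nu>\<^sub>3"
    using assms(4) by simp_all
  have "fragmentable V (\<lambda>x. (x = \<nu>\<^sub>0 \<or> x = \<nu>\<^sub>1) \<or> (x = \<nu>\<^sub>2 \<or> x = \<nu>\<^sub>3))"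
    using assms(1,3) by (rule fragmentable_disj) (use neq in \<open>unfold disjoint_fun_def, blast\<close>)
  then have "fragmentable V (\<lambda>x. ((x = \<nu>\<^sub>0 \<or> x = \<nu>\<^sub>1) \<or> (x = \<nu>\<^sub>2 \<or> x = \<nu>\<^sub>3))
      \<and> \<not> (x = \<nu>\<^sub>1 \<or> x = \<nu>\<^sub>2))"
    using assms(2) by (rule fragmentable_diff) blast
  then show ?thesis
    by (rule fragmentable_cong) (use neq in \<open>unfold equiv_fun_def, blast\<close>)
qed

lemma card_sym_diff_flip:
  assumes "finite (sym_diff \<nu> \<mu>)" "l \<in> sym_diff \<nu> \<mu>"
  shows "card (sym_diff (flip \<nu> l) \<mu>) + 1 = card (sym_diff \<nu> \<mu>)"
proof -
  have "card (sym_diff \<nu> \<mu>) > 0"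
    using assms by (metis card_gt_0_iff empty_iff)
  then show ?thesis
    using card_Diff_singleton[OF assms(2)] sym_diff_flip[OF assms(2)] by simp
qed

lemma fragmentable_pair_flip_flip:
  assumes "l \<in> sym_diff \<nu> \<mu>" "l' \<in> sym_diff (flip \<nu> l) \<mu>" "\<nu> \<subseteq> V" "\<mu> \<subseteq> V"
    and "fragmentable V (\<lambda>x. x = flip (flip \<nu> l) l' \<or> x = \<mu>)" "flip (flip \<nu> l) l' \<noteq> \<mu>"
  shows "fragmentable V (\<lambda>x. x = \<nu> \<or> x = \<mu>)"
proof (rule fragmentable_pair_chain)
  define \<nu>\<^sub>1 \<nu>\<^sub>2 where "\<nu>\<^sub>1 = flip \<nu> l" and "\<nu>\<^sub>2 = flip \<nu>\<^sub>1 l'"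
  have "l \<in> V" "l' \<in> V"
    using assms(1-4) by (auto simp: flip_def)
  then show "fragmentable V (\<lambda>x. x = \<nu> \<or> x = \<nu>\<^sub>1)" "fragmentable V (\<lambda>x. x = \<nu>\<^sub>1 \<or> x = \<nu>\<^sub>2)"
    by (simp_all add: \<nu>\<^sub>1_def \<nu>\<^sub>2_def fragmentable_flip_pair)
  show "fragmentable V (\<lambda>x. x = \<nu>\<^sub>2 \<or> x = \<mu>)"
    using assms(5) by (simp add: \<nu>\<^sub>1_def \<nu>\<^sub>2_def)
  have "l \<notin> sym_diff \<nu>\<^sub>2 \<mu>"
    using assms(1,2) by (simp add: \<nu>\<^sub>1_def \<nu>\<^sub>2_def sym_diff_flip)
  then have "\<nu> \<noteq> \<mu>" "\<nu>\<^sub>1 \<noteq> \<mu>" "\<nu>\<^sub>2 \<noteq> \<mu>" "\<nu> \<noteq> \<nu>\<^sub>2"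
    using assms(1,2,6) by (auto simp: \<nu>\<^sub>1_def \<nu>\<^sub>2_def)
  moreover have "\<nu> \<noteq> \<nu>\<^sub>1" "\<nu>\<^sub>1 \<noteq> \<nu>\<^sub>2"
    by (metis \<nu>\<^sub>1_def \<nu>\<^sub>2_def flip_neq)+
  ultimately show "distinct [\<nu>, \<nu>\<^sub>1, \<nu>\<^sub>2, \<mu>]"
    by simp
qed

lemma fragmentable_pair_odd_sym_diff:
  assumes "finite V" "\<nu> \<subseteq> V" "\<mu> \<subseteq> V" "odd (card (sym_diff \<nu> \<mu>))"
  shows "fragmentable V (\<lambda>x. x = \<nu> \<or> x = \<mu>)"
  using assms(2-)
proof (induction "card (sym_diff \<nu> \<mu>)" arbitrary: \<nu> rule: less_induct)
  case less
  have fin: "finite (sym_diff \<nu> \<mu>)"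
    using less.prems assms(1) by (auto intro: finite_subset)
  have "sym_diff \<nu> \<mu> \<noteq> {}"
    using less.prems(3) by (metis card.empty even_zero)
  then obtain l where l: "l \<in> sym_diff \<nu> \<mu>"
    by blast
  define \<nu>\<^sub>1 where "\<nu>\<^sub>1 = flip \<nu> l"
  have "l \<in> V"
    using l less.prems by auto
  then have \<nu>\<^sub>1V: "\<nu>\<^sub>1 \<subseteq> V"
    using less.prems by (simp add: \<nu>\<^sub>1_def flip_subset)
  show ?case
  proof (cases "sym_diff \<nu>\<^sub>1 \<mu> = {}")
    case True
    then have "\<mu> = \<nu>\<^sub>1"
      by blast
    with \<open>l \<in> V\<close> show ?thesis
      by (simp add: \<nu>\<^sub>1_def fragmentable_flip_pair)
  next
    case False
    then obtain l' where l': "l' \<in> sym_diff \<nu>\<^sub>1 \<mu>"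
      by blast
    define \<nu>\<^sub>2 where "\<nu>\<^sub>2 = flip \<nu>\<^sub>1 l'"
    have "l' \<in> V"
      using l' \<nu>\<^sub>1V less.prems by auto
    then have \<nu>\<^sub>2V: "\<nu>\<^sub>2 \<subseteq> V"
      using \<nu>\<^sub>1V by (simp add: \<nu>\<^sub>2_def flip_subset)
    have "finite (sym_diff \<nu>\<^sub>1 \<mu>)"
      using fin l by (simp add: \<nu>\<^sub>1_def sym_diff_flip)
    then have "card (sym_diff \<nu> \<mu>) = card (sym_diff \<nu>\<^sub>2 \<mu>) + 2"
      using card_sym_diff_flip[OF fin l] card_sym_diff_flip[of \<nu>\<^sub>1 \<mu> l'] l'
      by (simp add: \<nu>\<^sub>1_def \<nu>\<^sub>2_def)
    moreover from this have "\<nu>\<^sub>2 \<noteq> \<mu>"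
      using less.prems(3) by auto
    ultimately show ?thesis
      using less.hyps[of \<nu>\<^sub>2] \<nu>\<^sub>2V less.prems l l'
      by (intro fragmentable_pair_flip_flip) (simp_all add: \<nu>\<^sub>1_def \<nu>\<^sub>2_def)
  qed
qed

definition models :: "nat set \<Rightarrow> (nat set \<Rightarrow> bool) \<Rightarrow> nat set set" where
  "models V \<phi> = {\<nu>. \<nu> \<subseteq> V \<and> \<phi> \<nu>}"

lemma finite_models: "finite V \<Longrightarrow> finite (models V \<phi>)"
  unfolding models_def by (rule finite_subset[of _ "Pow V"]) auto

lemma eul_eq_sum_models: "eul V \<phi> = (\<Sum>\<nu> \<in> models V \<phi>. (-1) ^ card \<nu>)"
  by (simp add: eul_def models_def)

lemma alternating_sum_eq_0_obtains_even_odd: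
  assumes "finite S" "S \<noteq> {}" "(\<Sum>\<nu> \<in> S. (-1::int) ^ card \<nu>) = 0"
  obtains \<nu> \<mu> where "\<nu> \<in> S" "\<mu> \<in> S" "even (card \<nu>)" "odd (card \<mu>)"
proof -
  have "\<exists>\<nu> \<in> S. even (card \<nu>)"
  proof (rule ccontr)
    assume "\<not> ?thesis"
    then have "(\<Sum>\<nu> \<in> S. (-1::int) ^ card \<nu>) = - int (card S)"
      by simp
    with assms show False
      by simp
  qed
  moreover have "\<exists>\<mu> \<in> S. odd (card \<mu>)"
  proof (rule ccontr)
    assume "\<not> ?thesis"
    then have "(\<Sum>\<nu> \<in> S. (-1::int) ^ card \<nu>) = int (card S)"
      by simp
    with assms show False
      by simp
  qed
  ultimately show ?thesis
    using that by blast
qed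

lemma eul_remove_even_odd:
  assumes "finite V" "\<nu> \<in> models V \<phi>" "\<mu> \<in> models V \<phi>" "even (card \<nu>)" "odd (card \<mu>)"
  shows "eul V (\<lambda>x. \<phi> x \<and> \<not> (x = \<nu> \<or> x = \<mu>)) = eul V \<phi>"
proof -
  have "models V (\<lambda>x. \<phi> x \<and> \<not> (x = \<nu> \<or> x = \<mu>)) = models V \<phi> - {\<nu>, \<mu>}"
    by (auto simp: models_def)
  moreover have "\<nu> \<noteq> \<mu>"
    using assms(4,5) by auto
  ultimately show ?thesis
    using assms finite_models[OF assms(1)] by (simp add: eul_eq_sum_models sum_diff)
qed

lemma fragmentable_pair_even_odd:
  assumes "finite V" "\<nu> \<subseteq> V" "\<mu> \<subseteq> V" "even (card \<nu>)" "odd (card \<mu>)"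
  shows "fragmentable V (\<lambda>x. x = \<nu> \<or> x = \<mu>)"
proof (rule fragmentable_pair_odd_sym_diff)
  have "finite \<nu>" "finite \<mu>"
    using assms(1-3) by (auto intro: finite_subset)
  then show "odd (card (sym_diff \<nu> \<mu>))"
    using assms(4,5) by (simp add: even_card_sym_diff_iff)
qed (use assms in auto)

lemma fragmentable_if_eul_eq_0:
  assumes "finite V" "V \<noteq> {}" "eul V \<phi> = 0"
  shows "fragmentable V \<phi>"
  using assms(3)
proof (induction "card (models V \<phi>)" arbitrary: \<phi> rule: less_induct)
  case less
  show ?case
  proof (cases "models V \<phi> = {}")
    case True
    then have "equiv_fun V (\<lambda>_. False) \<phi>"
      by (auto simp: models_def equiv_fun_def)
    with fragmentable_False[OF assms(2)] show ?thesis
      by (rule fragmentable_cong)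
  next
    case False
    then obtain \<nu> \<mu> where \<nu>\<mu>: "\<nu> \<in> models V \<phi>" "\<mu> \<in> models V \<phi>"
      and parities: "even (card \<nu>)" "odd (card \<mu>)"
      using alternating_sum_eq_0_obtains_even_odd finite_models[OF assms(1)] less.prems
      by (metis eul_eq_sum_models)
    define \<chi> where "\<chi> = (\<lambda>x. \<phi> x \<and> \<not> (x = \<nu> \<or> x = \<mu>))"
    have "models V \<chi> \<subset> models V \<phi>"
      using \<nu>\<mu> by (auto simp: models_def \<chi>_def)
    then have "card (models V \<chi>) < card (models V \<phi>)"
      by (rule psubset_card_mono[OF finite_models[OF assms(1)]])
    moreover have "eul V \<chi> = 0"
      using eul_remove_even_odd[OF assms(1) \<nu>\<mu> parities] less.prems by (simp add: \<chi>_def)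
    ultimately have "fragmentable V (\<lambda>x. \<phi> x \<and> \<not> (x = \<nu> \<or> x = \<mu>))"
      using less.hyps unfolding \<chi>_def by blast
    moreover have "fragmentable V (\<lambda>x. x = \<nu> \<or> x = \<mu>)"
      using \<nu>\<mu> parities assms(1) by (intro fragmentable_pair_even_odd) (auto simp: models_def)
    ultimately show ?thesis
      by (rule fragmentable_of_diff) (use \<nu>\<mu> in \<open>auto simp: models_def\<close>)
  qed
qed

theorem proposition5p1:
  fixes k :: nat and \<phi> :: "nat set \<Rightarrow> bool"
  assumes "k \<ge> 1"
    and "eul {0..k} \<phi> = 0"
  shows "fragmentable {0..k} \<phi>"
  using fragmentable_if_eul_eq_0[OF _ _ assms(2)] by simp

end
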